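(* Under the standing setup, define $$D^+_{MOB}=\frac{\mathbb E[\min\{Y_N-\underline Y(1-X_N),\,\overline Y X_N\}]-\mathbb E[X]\,\mathbb E[Y]}{\mathrm{Var}(X)},\qquad D^-_{MOB}=\frac{\mathbb E[Y](1-\mathbb E[X])-\mathbb E[\min\{Y_N-\underline Y X_N,\,\overline Y(1-X_N)\}]}{\mathrm{Var}(X)}.$$ Then $D\in[D^-_{MOB},D^+_{MOB}]$, and this bound is sharp (absent additional information).
   Context: Let $(X,Y,N)$ be a random triple with $X\in\{0,1\}$, $Y$ real-valued, $N$ taking values in a finite set $\mathcal N$. Write $p_n=\Pr(N=n)$, $X_n=\mathbb E[X\mid N=n]$, $Y_n=\mathbb E[Y\mid N=n]$, $X_N=\mathbb E[X\mid N]$, $Y_N=\mathbb E[Y\mid N]$. Assume some $n$ has $p_n>0$ and $X_n\in(0,1)$. Fix reals $\underline Y\le\overline Y$ and assume $\mathbb E[Y\mid X=x,N=n]\in[\underline Y,\overline Y]$ whenever $\Pr(X=x,N=n)>0$. $D=\mathbb E[Y\mid X=1]-\mathbb E[Y\mid X=0]$. Observed data: $(p_n,X_n,Y_n)_n$. Sharpness: the parameter lies in the interval for every joint distribution satisfying the standing assumptions, and every value in the interval is attained by some joint distribution of $(X,Y,N)$ with the same observed data satisfying the standing bound. *)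

theory Defs
  imports "HOL-Probability.Probability"
begin

text \<open>A random triple (X,Y,N) is represented by its joint law: a probability
measure on real \<times> real \<times> 'n, with X, Y, N the coordinate projections.\<close>

definition tX :: "real \<times> real \<times> 'n \<Rightarrow> real" where "tX \<omega> = fst \<omega>"
definition tY :: "real \<times> real \<times> 'n \<Rightarrow> real" where "tY \<omega> = fst (snd \<omega>)"
definition tN :: "real \<times> real \<times> 'n \<Rightarrow> 'n" where "tN \<omega> = snd (snd \<omega>)"

definition cond_ev :: "'a measure \<Rightarrow> ('a \<Rightarrow> real) \<Rightarrow> 'a set \<Rightarrow> real" where
  "cond_ev M f A = (LINT \<omega>:A|M. f \<omega>) / measure M A"

definition pN :: "(real \<times> real \<times> 'n) measure \<Rightarrow> 'n \<Rightarrow> real" where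
  "pN P n = measure P {\<omega>. tN \<omega> = n}"
definition XN :: "(real \<times> real \<times> 'n) measure \<Rightarrow> 'n \<Rightarrow> real" where
  "XN P n = cond_ev P tX {\<omega>. tN \<omega> = n}"
definition YN :: "(real \<times> real \<times> 'n) measure \<Rightarrow> 'n \<Rightarrow> real" where
  "YN P n = cond_ev P tY {\<omega>. tN \<omega> = n}"

definition same_obs :: "(real \<times> real \<times> 'n) measure \<Rightarrow> (real \<times> real \<times> 'n) measure \<Rightarrow> bool" where
  "same_obs P Q \<longleftrightarrow> (\<forall>n. pN P n = pN Q n \<and> XN P n = XN Q n \<and> YN P n = YN Q n)"

definition valid_triple :: "(real \<times> real \<times> 'n::finite) measure \<Rightarrow> real \<Rightarrow> real \<Rightarrow> bool" where
  "valid_triple P lo hi \<longleftrightarrow>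
     prob_space P \<and>
     sets P = sets (borel \<Otimes>\<^sub>M (borel \<Otimes>\<^sub>M count_space UNIV)) \<and>
     (AE \<omega> in P. tX \<omega> \<in> {0, 1}) \<and>
     integrable P tY \<and>
     (\<forall>x\<in>{0::real, 1}. \<forall>n.
        measure P {\<omega>. tX \<omega> = x \<and> tN \<omega> = n} > 0 \<longrightarrow>
        cond_ev P tY {\<omega>. tX \<omega> = x \<and> tN \<omega> = n} \<in> {lo..hi})"

definition Dpar :: "(real \<times> real \<times> 'n) measure \<Rightarrow> real" where
  "Dpar P = cond_ev P tY {\<omega>. tX \<omega> = 1} - cond_ev P tY {\<omega>. tX \<omega> = 0}"

definition var_X :: "(real \<times> real \<times> 'n) measure \<Rightarrow> real" where
  "var_X P = (\<integral>\<omega>. (tX \<omega> - (\<integral>\<omega>'. tX \<omega>' \<partial>P))\<^sup>2 \<partial>P)"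

definition D_MOB_plus :: "(real \<times> real \<times> 'n) measure \<Rightarrow> real \<Rightarrow> real \<Rightarrow> real" where
  "D_MOB_plus P lo hi =
     ((\<integral>\<omega>. min (YN P (tN \<omega>) - lo * (1 - XN P (tN \<omega>))) (hi * XN P (tN \<omega>)) \<partial>P)
       - (\<integral>\<omega>. tX \<omega> \<partial>P) * (\<integral>\<omega>. tY \<omega> \<partial>P)) / var_X P"

definition D_MOB_minus :: "(real \<times> real \<times> 'n) measure \<Rightarrow> real \<Rightarrow> real \<Rightarrow> real" where
  "D_MOB_minus P lo hi =
     ((\<integral>\<omega>. tY \<omega> \<partial>P) * (1 - (\<integral>\<omega>. tX \<omega> \<partial>P))
       - (\<integral>\<omega>. min (YN P (tN \<omega>) - lo * XN P (tN \<omega>)) (hi * (1 - XN P (tN \<omega>))) \<partial>P))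
     / var_X P"

end

theory Submission
  imports Defs
begin

text \<open>
  Since X is binary, D is the regression slope Cov(X, Y) / Var(X), and E[XY] is the sum over
  cells N = n of the treated contributions s1 = E[Y; X = 1, N = n]. In a cell of mass p,
  treated share x and mean y, the bounds on the two arm means give
  lo p x \<le> s1 \<le> hi p x and lo p (1 - x) \<le> p y - s1 \<le> hi p (1 - x), so s1 ranges
  exactly over p [max(lo x, y - hi (1 - x)), min(y - lo (1 - x), hi x)]; summing over cells
  gives the bounds. Conversely, any choice of s1 in these intervals is realised without
  changing the observed data by the law that keeps (X, N) and makes Y constant on each arm of
  each cell, and moving all s1 simultaneously between their extremes sweeps the whole
  interval of values of D.
\<close>

text \<open>The integrands of D_MOB_plus and D_MOB_minus, the latter rewritten as
  y - min(y - lo x, hi (1 - x)).\<close>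

definition mob_upper :: "real \<Rightarrow> real \<Rightarrow> real \<Rightarrow> real \<Rightarrow> real" where
  "mob_upper lo hi x y = min (y - lo * (1 - x)) (hi * x)"

definition mob_lower :: "real \<Rightarrow> real \<Rightarrow> real \<Rightarrow> real \<Rightarrow> real" where
  "mob_lower lo hi x y = max (lo * x) (y - hi * (1 - x))"

lemma arm_share_within_mob:
  fixes p a b x y s1 s0 lo hi :: real
  assumes "0 \<le> p" "p = a + b" "p * x = a" "p * y = s1 + s0"
    and "lo * a \<le> s1" "s1 \<le> hi * a" "lo * b \<le> s0" "s0 \<le> hi * b"
  shows "p * mob_lower lo hi x y \<le> s1" "s1 \<le> p * mob_upper lo hi x y"
proof -
  have "p * mob_lower lo hi x y = max (lo * a) (s1 + s0 - hi * b)"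
    using assms(1-4) by (simp add: mob_lower_def max_mult_distrib_left algebra_simps)
  then show "p * mob_lower lo hi x y \<le> s1" using assms(5,8) by simp
  have "p * mob_upper lo hi x y = min (s1 + s0 - lo * b) (hi * a)"
    using assms(1-4) by (simp add: mob_upper_def min_mult_distrib_left algebra_simps)
  then show "s1 \<le> p * mob_upper lo hi x y" using assms(6,7) by simp
qed

lemma split_mean_between_arms:
  fixes lo hi x y c :: real
  assumes "lo \<le> hi" "mob_lower lo hi x y \<le> c" "c \<le> mob_upper lo hi x y"
  obtains y1 y0 where "x * y1 = c" "(1 - x) * y0 = y - c" "y1 \<in> {lo..hi}" "y0 \<in> {lo..hi}"
proof -
  have c: "lo * x \<le> c" "c \<le> hi * x" "lo * (1 - x) \<le> y - c" "y - c \<le> hi * (1 - x)"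
    using assms(2,3) by (auto simp: mob_lower_def mob_upper_def)
  show ?thesis
  proof (cases "lo = hi")
    case True
    have "x * lo = c" "(1 - x) * lo = y - c"
      using c unfolding True by (simp_all add: mult.commute)
    then show ?thesis using that[of lo lo] assms(1) by simp
  next
    case False
    then have "0 < hi - lo" using assms(1) by simp
    moreover have "0 \<le> (hi - lo) * x" "0 \<le> (hi - lo) * (1 - x)"
      using c by (simp_all add: algebra_simps)
    ultimately have x: "0 \<le> x" "0 \<le> 1 - x" by (simp_all add: zero_le_mult_iff)
    have treated: "x * (if x = 0 then lo else c / x) = c"
      "(if x = 0 then lo else c / x) \<in> {lo..hi}"
      using c(1,2) x(1) assms(1) by (auto simp: le_divide_eq divide_le_eq mult.commute)
    have untreated: "(1 - x) * (if x = 1 then lo else (y - c) / (1 - x)) = y - c"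
      "(if x = 1 then lo else (y - c) / (1 - x)) \<in> {lo..hi}"
      using c(3,4) x(2) assms(1) by (auto simp: le_divide_eq divide_le_eq mult.commute)
    show ?thesis using that[OF treated(1) untreated(1) treated(2) untreated(2)] .
  qed
qed

lemma weighted_sum_interpolation:
  fixes w L U :: "'a \<Rightarrow> real"
  assumes "(\<Sum>i\<in>I. w i * L i) \<le> T" "T \<le> (\<Sum>i\<in>I. w i * U i)"
  obtains c where "\<And>i. L i \<le> U i \<Longrightarrow> c i \<in> {L i..U i}" "(\<Sum>i\<in>I. w i * c i) = T"
proof -
  define SL SU where "SL = (\<Sum>i\<in>I. w i * L i)" and "SU = (\<Sum>i\<in>I. w i * U i)"
  define t where "t = (if SU = SL then 0 else (T - SL) / (SU - SL))"
  have t: "0 \<le> t" "t \<le> 1" "SL + t * (SU - SL) = T"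
    using assms by (auto simp: t_def SL_def[symmetric] SU_def[symmetric] divide_le_eq)
  have "(\<Sum>i\<in>I. w i * (L i + t * (U i - L i))) = SL + t * (SU - SL)"
    by (simp add: SL_def SU_def algebra_simps sum.distrib sum_distrib_left sum_subtractf)
  moreover have "L i + t * (U i - L i) \<in> {L i..U i}" if "L i \<le> U i" for i
  proof -
    have "0 \<le> t * (U i - L i)" using t(1) that by simp
    moreover have "t * (U i - L i) \<le> U i - L i"
      using t(1,2) that by (intro mult_left_le_one_le) simp_all
    ultimately show ?thesis by simp
  qed
  ultimately show ?thesis using t(3) that[of "\<lambda>i. L i + t * (U i - L i)"] by simp
qed

lemma (in prob_space) set_integral_eq_measure_mult_cond_ev:
  fixes f :: "'a \<Rightarrow> real"
  assumes "A \<in> sets M"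
  shows "(LINT x:A|M. f x) = measure M A * cond_ev M f A"
proof (cases "measure M A = 0")
  case True
  then have "AE x in M. x \<notin> A"
    using assms by (intro AE_not_in) (simp add: null_setsI emeasure_eq_measure)
  then have "(LINT x:A|M. f x) = 0"
    unfolding set_lebesgue_integral_def by (intro integral_eq_zero_AE) auto
  then show ?thesis using True by simp
qed (simp add: cond_ev_def)

lemma (in prob_space) measure_eq_set_integral_one:
  "A \<in> sets M \<Longrightarrow> measure M A = (LINT x:A|M. 1)"
  by (simp add: set_integral_const emeasure_eq_measure)

abbreviation triple_space :: "(real \<times> real \<times> 'n) measure" where
  "triple_space \<equiv> borel \<Otimes>\<^sub>M (borel \<Otimes>\<^sub>M count_space UNIV)"

definition cell :: "'n \<Rightarrow> (real \<times> real \<times> 'n) set" where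
  "cell n = {\<omega>. tN \<omega> = n}"

definition arm_cell :: "real \<Rightarrow> 'n \<Rightarrow> (real \<times> real \<times> 'n) set" where
  "arm_cell x n = {\<omega>. tX \<omega> = x \<and> tN \<omega> = n}"

definition arm_prob :: "(real \<times> real \<times> 'n) measure \<Rightarrow> real \<Rightarrow> 'n \<Rightarrow> real" where
  "arm_prob P x n = measure P (arm_cell x n)"

definition arm_Y :: "(real \<times> real \<times> 'n) measure \<Rightarrow> real \<Rightarrow> 'n \<Rightarrow> real" where
  "arm_Y P x n = (LINT \<omega>:arm_cell x n|P. tY \<omega>)"

lemma XN_eq_cond_ev_cell: "XN P n = cond_ev P tX (cell n)"
  by (simp add: XN_def cell_def)

lemma YN_eq_cond_ev_cell: "YN P n = cond_ev P tY (cell n)"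
  by (simp add: YN_def cell_def)

lemma pN_eq_measure_cell: "pN P n = measure P (cell n)"
  by (simp add: pN_def cell_def)

text \<open>Junk value: the conditional mean over a null cell is 0 / 0 = 0.\<close>

lemma YN_eq_zero_if_pN_eq_zero: "pN P n = 0 \<Longrightarrow> YN P n = 0"
  by (simp add: YN_eq_cond_ev_cell cond_ev_def pN_eq_measure_cell)

lemma space_triple_space[simp]: "space triple_space = UNIV"
  by (simp add: space_pair_measure)

lemma measurable_tX[measurable]: "tX \<in> borel_measurable triple_space"
  unfolding tX_def[abs_def] by measurable

lemma measurable_tY[measurable]: "tY \<in> borel_measurable triple_space"
  unfolding tY_def[abs_def] by measurable

lemma measurable_tN[measurable]: "tN \<in> measurable triple_space (count_space UNIV)"
  unfolding tN_def[abs_def] by measurable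

lemma sets_tX_eq[measurable]: "{\<omega>. tX \<omega> = x} \<in> sets triple_space"
proof -
  have "{\<omega> \<in> space triple_space. tX \<omega> = x} \<in> sets triple_space" by measurable
  then show ?thesis by simp
qed

lemma sets_cell[simp, measurable]: "cell n \<in> sets triple_space"
proof -
  have "{\<omega> \<in> space triple_space. tN \<omega> = n} \<in> sets triple_space" by measurable
  then show ?thesis by (simp add: cell_def)
qed

lemma arm_cell_eq: "arm_cell x n = {\<omega>. tX \<omega> = x} \<inter> cell n"
  by (auto simp: arm_cell_def cell_def)

lemma sets_arm_cell[simp, measurable]: "arm_cell x n \<in> sets triple_space"
  unfolding arm_cell_eq by measurable

locale valid_law =
  fixes P :: "(real \<times> real \<times> 'n::finite) measure" and lo hi :: real
  assumes valid: "valid_triple P lo hi"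
begin

sublocale prob_space P
  using valid by (simp add: valid_triple_def)

lemma sets_P[measurable_cong]: "sets P = sets triple_space"
  using valid by (simp add: valid_triple_def)

lemma space_P[simp]: "space P = UNIV"
  using sets_eq_imp_space_eq[OF sets_P] by simp

lemma prob_UNIV[simp]: "prob UNIV = 1"
  using prob_space by simp

lemma sets_cells_P[simp]:
  "cell n \<in> sets P" "arm_cell x n \<in> sets P" "{\<omega>. tX \<omega> = x} \<in> sets P"
  by measurable

lemma AE_tX_01: "AE \<omega> in P. tX \<omega> \<in> {0, 1}"
  using valid by (simp add: valid_triple_def)

lemma integrable_tY: "integrable P tY"
  using valid by (simp add: valid_triple_def)

lemma integrable_tX: "integrable P tX"
  by (rule integrable_const_bound[where B = 1]) (use AE_tX_01 in auto)

lemma integrable_fun_tN: "integrable P (\<lambda>\<omega>. F (tN \<omega>) :: real)"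
  by (rule integrable_const_bound[where B = "\<Sum>n\<in>UNIV. \<bar>F n\<bar>"])
     (auto intro!: member_le_sum)

lemma set_integrable_of_integrable:
  fixes g :: "_ \<Rightarrow> real"
  shows "A \<in> sets P \<Longrightarrow> integrable P g \<Longrightarrow> set_integrable P A g"
  unfolding set_integrable_def by (rule integrable_mult_indicator)

lemma set_integral_split_cells:
  fixes g :: "_ \<Rightarrow> real"
  assumes [measurable]: "S \<in> sets P" and "integrable P g"
  shows "(LINT \<omega>:S|P. g \<omega>) = (\<Sum>n\<in>UNIV. LINT \<omega>:S \<inter> cell n|P. g \<omega>)"
proof -
  have "S = (\<Union>n\<in>UNIV. S \<inter> cell n)" by (auto simp: cell_def)
  also have "(LINT \<omega>:\<dots>|P. g \<omega>) = (\<Sum>n\<in>UNIV. LINT \<omega>:S \<inter> cell n|P. g \<omega>)"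
    using assms by (intro set_integral_finite_Union)
      (auto simp: disjoint_family_on_def cell_def intro!: set_integrable_of_integrable)
  finally show ?thesis .
qed

lemma set_integral_split_arms:
  fixes g :: "_ \<Rightarrow> real"
  assumes [measurable]: "S \<in> sets P" and "integrable P g"
  shows "(LINT \<omega>:S|P. g \<omega>) =
    (LINT \<omega>:S \<inter> {\<omega>. tX \<omega> = 1}|P. g \<omega>) + (LINT \<omega>:S \<inter> {\<omega>. tX \<omega> = 0}|P. g \<omega>)"
proof -
  have "(LINT \<omega>:S|P. g \<omega>) = (LINT \<omega>:(S \<inter> {\<omega>. tX \<omega> = 1}) \<union> (S \<inter> {\<omega>. tX \<omega> = 0})|P. g \<omega>)"
    using assms AE_tX_01
    by (intro set_integral_cong_set) (auto simp: set_borel_measurable_def)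
  also have "\<dots> = (LINT \<omega>:S \<inter> {\<omega>. tX \<omega> = 1}|P. g \<omega>) + (LINT \<omega>:S \<inter> {\<omega>. tX \<omega> = 0}|P. g \<omega>)"
    using assms by (intro set_integral_Un) (auto intro!: set_integrable_of_integrable)
  finally show ?thesis .
qed

lemma set_integral_arm_eq_sum_cells:
  fixes g :: "_ \<Rightarrow> real"
  assumes "integrable P g"
  shows "(LINT \<omega>:{\<omega>. tX \<omega> = x}|P. g \<omega>) = (\<Sum>n\<in>UNIV. LINT \<omega>:arm_cell x n|P. g \<omega>)"
  using set_integral_split_cells[OF _ assms] by (simp add: arm_cell_eq)

lemma set_integral_cell_eq_arms:
  fixes g :: "_ \<Rightarrow> real"
  assumes "integrable P g"
  shows "(LINT \<omega>:cell n|P. g \<omega>) = (LINT \<omega>:arm_cell 1 n|P. g \<omega>) + (LINT \<omega>:arm_cell 0 n|P. g \<omega>)"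
  using set_integral_split_arms[OF _ assms, of "cell n"] by (simp add: arm_cell_eq Int_commute)

lemma pN_eq_arm_prob_sum: "pN P n = arm_prob P 1 n + arm_prob P 0 n"
  using set_integral_cell_eq_arms[of "\<lambda>_. 1" n]
  by (simp add: pN_eq_measure_cell arm_prob_def measure_eq_set_integral_one)

lemma pN_mult_XN: "pN P n * XN P n = arm_prob P 1 n"
proof -
  have "pN P n * XN P n = (LINT \<omega>:cell n|P. tX \<omega>)"
    by (simp add: set_integral_eq_measure_mult_cond_ev pN_eq_measure_cell XN_eq_cond_ev_cell)
  also have "\<dots> = (LINT \<omega>:arm_cell 1 n|P. 1) + (LINT \<omega>:arm_cell 0 n|P. 0)"
    unfolding set_integral_cell_eq_arms[OF integrable_tX]
    by (intro arg_cong2[where f = "(+)"] set_lebesgue_integral_cong sets_cells_P)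
      (auto simp: arm_cell_def)
  finally show ?thesis by (simp add: arm_prob_def measure_eq_set_integral_one)
qed

lemma pN_mult_YN: "pN P n * YN P n = arm_Y P 1 n + arm_Y P 0 n"
  using set_integral_cell_eq_arms[OF integrable_tY, of n]
  by (simp add: set_integral_eq_measure_mult_cond_ev pN_eq_measure_cell YN_eq_cond_ev_cell arm_Y_def)

lemma arm_Y_bounds:
  assumes "x \<in> {0, 1}"
  shows "lo * arm_prob P x n \<le> arm_Y P x n \<and> arm_Y P x n \<le> hi * arm_prob P x n"
proof -
  have "arm_Y P x n = arm_prob P x n * cond_ev P tY (arm_cell x n)"
    by (simp add: arm_Y_def arm_prob_def set_integral_eq_measure_mult_cond_ev)
  moreover have "cond_ev P tY (arm_cell x n) \<in> {lo..hi}" if "0 < arm_prob P x n"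
    using valid assms that by (auto simp: valid_triple_def arm_prob_def arm_cell_def)
  moreover have "0 \<le> arm_prob P x n" by (simp add: arm_prob_def)
  ultimately show ?thesis by (cases "arm_prob P x n = 0") (auto intro: mult_left_mono)
qed

lemma integral_eq_sum_cells:
  fixes f :: "_ \<Rightarrow> real"
  assumes "integrable P f"
  shows "(\<integral>\<omega>. f \<omega> \<partial>P) = (\<Sum>n\<in>UNIV. LINT \<omega>:cell n|P. f \<omega>)"
  using set_integral_split_cells[OF sets.top assms] by (simp add: set_lebesgue_integral_def)

lemma expectation_eq_sum_pN:
  fixes f :: "_ \<Rightarrow> real"
  assumes "integrable P f"
  shows "expectation f = (\<Sum>n\<in>UNIV. pN P n * cond_ev P f (cell n))"
  by (simp add: integral_eq_sum_cells[OF assms] set_integral_eq_measure_mult_cond_ev pN_eq_measure_cell)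

lemma integral_fun_tN: "(\<integral>\<omega>. F (tN \<omega>) \<partial>P) = (\<Sum>n\<in>UNIV. pN P n * F n)"
proof -
  have "(LINT \<omega>:cell n|P. F (tN \<omega>)) = (LINT \<omega>:cell n|P. F n)" for n
    by (rule set_lebesgue_integral_cong[OF sets_cells_P(1)]) (auto simp: cell_def)
  then show ?thesis
    by (simp add: integral_eq_sum_cells[OF integrable_fun_tN] set_integral_const
        emeasure_eq_measure pN_eq_measure_cell mult.commute)
qed

lemma sum_pN: "(\<Sum>n\<in>UNIV. pN P n) = 1"
  using integral_fun_tN[of "\<lambda>_. 1"] by simp

lemma expectation_tX: "expectation tX = (\<Sum>n\<in>UNIV. pN P n * XN P n)"
  using expectation_eq_sum_pN[OF integrable_tX] by (simp add: XN_eq_cond_ev_cell)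

lemma expectation_tY: "expectation tY = (\<Sum>n\<in>UNIV. pN P n * YN P n)"
  using expectation_eq_sum_pN[OF integrable_tY] by (simp add: YN_eq_cond_ev_cell)

lemma measure_arm: "measure P {\<omega>. tX \<omega> = x} = (\<Sum>n\<in>UNIV. arm_prob P x n)"
  using set_integral_arm_eq_sum_cells[of "\<lambda>_. 1" x] by (simp add: measure_eq_set_integral_one arm_prob_def)

lemma sum_arm_prob:
  "(\<Sum>n\<in>UNIV. arm_prob P 1 n) = expectation tX"
  "(\<Sum>n\<in>UNIV. arm_prob P 0 n) = 1 - expectation tX"
proof -
  show treated: "(\<Sum>n\<in>UNIV. arm_prob P 1 n) = expectation tX"
    by (simp add: expectation_tX pN_mult_XN)
  have "(\<Sum>n\<in>UNIV. arm_prob P 1 n) + (\<Sum>n\<in>UNIV. arm_prob P 0 n) = 1"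
    using sum_pN by (simp add: pN_eq_arm_prob_sum sum.distrib)
  then show "(\<Sum>n\<in>UNIV. arm_prob P 0 n) = 1 - expectation tX"
    using treated by simp
qed

lemma var_X_eq: "var_X P = expectation tX * (1 - expectation tX)"
proof -
  define q where "q = expectation tX"
  have "AE \<omega> in P. (tX \<omega> - q)\<^sup>2 = (1 - 2 * q) * tX \<omega> + q\<^sup>2"
    using AE_tX_01 by eventually_elim (auto simp: power2_eq_square algebra_simps)
  then have "var_X P = (\<integral>\<omega>. (1 - 2 * q) * tX \<omega> + q\<^sup>2 \<partial>P)"
    unfolding var_X_def q_def[symmetric] by (intro integral_cong_AE) simp_all
  also have "\<dots> = (1 - 2 * q) * q + q\<^sup>2"
    using integrable_tX by (simp add: q_def)
  finally show ?thesis by (simp add: q_def power2_eq_square algebra_simps)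
qed

lemma Dpar_eq_cov:
  assumes "0 < expectation tX" "expectation tX < 1"
  shows "Dpar P = ((\<Sum>n\<in>UNIV. arm_Y P 1 n) - expectation tX * expectation tY) / var_X P"
proof -
  have cond_ev_arm:
    "cond_ev P tY {\<omega>. tX \<omega> = x} = (\<Sum>n\<in>UNIV. arm_Y P x n) / (\<Sum>n\<in>UNIV. arm_prob P x n)" for x
    by (simp add: cond_ev_def measure_arm set_integral_arm_eq_sum_cells[OF integrable_tY] arm_Y_def)
  have "expectation tY = (\<Sum>n\<in>UNIV. arm_Y P 1 n) + (\<Sum>n\<in>UNIV. arm_Y P 0 n)"
    by (simp add: expectation_tY pN_mult_YN sum.distrib)
  then show ?thesis
    using assms by (simp add: Dpar_def cond_ev_arm sum_arm_prob var_X_eq field_simps)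
qed

lemma D_MOB_plus_eq:
  "D_MOB_plus P lo hi = ((\<Sum>n\<in>UNIV. pN P n * mob_upper lo hi (XN P n) (YN P n))
     - expectation tX * expectation tY) / var_X P"
  using integral_fun_tN[of "\<lambda>n. mob_upper lo hi (XN P n) (YN P n)"]
  by (simp add: D_MOB_plus_def mob_upper_def)

lemma D_MOB_minus_eq:
  "D_MOB_minus P lo hi = ((\<Sum>n\<in>UNIV. pN P n * mob_lower lo hi (XN P n) (YN P n))
     - expectation tX * expectation tY) / var_X P"
proof -
  define m where "m n = min (YN P n - lo * XN P n) (hi * (1 - XN P n))" for n
  have "mob_lower lo hi (XN P n) (YN P n) = YN P n - m n" for n
    by (simp add: mob_lower_def m_def min_def max_def)
  then have "(\<Sum>n\<in>UNIV. pN P n * mob_lower lo hi (XN P n) (YN P n))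
      = expectation tY - (\<Sum>n\<in>UNIV. pN P n * m n)"
    by (simp add: expectation_tY right_diff_distrib sum_subtractf)
  then show ?thesis
    using integral_fun_tN[of m] by (simp add: D_MOB_minus_def m_def algebra_simps)
qed

lemma arm_Y_within_mob:
  "pN P n * mob_lower lo hi (XN P n) (YN P n) \<le> arm_Y P 1 n"
  "arm_Y P 1 n \<le> pN P n * mob_upper lo hi (XN P n) (YN P n)"
  using arm_share_within_mob[OF _ pN_eq_arm_prob_sum pN_mult_XN pN_mult_YN]
    arm_Y_bounds[of 1 n] arm_Y_bounds[of 0 n]
  by (simp_all add: pN_eq_measure_cell)

lemma mob_lower_le_upper:
  "0 < pN P n \<Longrightarrow> mob_lower lo hi (XN P n) (YN P n) \<le> mob_upper lo hi (XN P n) (YN P n)"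
  using arm_Y_within_mob[of n] order.trans mult_le_cancel_left_pos by metis

lemma arm_prob_le_pN: "arm_prob P 1 n \<le> pN P n" "arm_prob P 0 n \<le> pN P n"
  using pN_eq_arm_prob_sum[of n] by (simp_all add: arm_prob_def)

lemma expectation_tX_strictly_between:
  assumes "0 < pN P n" "XN P n \<in> {0<..<1}"
  shows "0 < expectation tX" "expectation tX < 1"
proof -
  have "arm_prob P 1 n = pN P n * XN P n" "arm_prob P 0 n = pN P n * (1 - XN P n)"
    using pN_mult_XN[of n] pN_eq_arm_prob_sum[of n] by (simp_all add: algebra_simps)
  then have pos: "0 < arm_prob P 1 n" "0 < arm_prob P 0 n"
    using assms by simp_all
  have le_sum: "arm_prob P x n \<le> (\<Sum>m\<in>UNIV. arm_prob P x m)" for x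
    by (rule member_le_sum) (simp_all add: arm_prob_def)
  show "0 < expectation tX" "expectation tX < 1"
    using pos le_sum[of 1] le_sum[of 0] sum_arm_prob by linarith+
qed

lemma Dpar_within_mob_bounds:
  assumes "0 < expectation tX" "expectation tX < 1"
  shows "Dpar P \<in> {D_MOB_minus P lo hi..D_MOB_plus P lo hi}"
proof -
  have "0 < var_X P" using assms by (simp add: var_X_eq)
  moreover have
    "(\<Sum>n\<in>UNIV. pN P n * mob_lower lo hi (XN P n) (YN P n)) \<le> (\<Sum>n\<in>UNIV. arm_Y P 1 n)"
    "(\<Sum>n\<in>UNIV. arm_Y P 1 n) \<le> (\<Sum>n\<in>UNIV. pN P n * mob_upper lo hi (XN P n) (YN P n))"
    by (intro sum_mono arm_Y_within_mob)+
  ultimately show ?thesis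
    by (simp add: Dpar_eq_cov[OF assms] D_MOB_plus_eq D_MOB_minus_eq divide_right_mono)
qed

end

definition reassign_Y :: "('n \<Rightarrow> real) \<Rightarrow> ('n \<Rightarrow> real) \<Rightarrow> real \<times> real \<times> 'n \<Rightarrow> real \<times> real \<times> 'n" where
  "reassign_Y y1 y0 \<omega> = (tX \<omega>, if tX \<omega> = 1 then y1 (tN \<omega>) else y0 (tN \<omega>), tN \<omega>)"

lemma reassign_Y_simps[simp]:
  "tX (reassign_Y y1 y0 \<omega>) = tX \<omega>" "tN (reassign_Y y1 y0 \<omega>) = tN \<omega>"
  "tY (reassign_Y y1 y0 \<omega>) = (if tX \<omega> = 1 then y1 (tN \<omega>) else y0 (tN \<omega>))"
  by (simp_all add: reassign_Y_def tX_def tY_def tN_def)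

lemma vimage_reassign_Y[simp]:
  "reassign_Y y1 y0 -` cell n = cell n" "reassign_Y y1 y0 -` arm_cell x n = arm_cell x n"
  by (auto simp: cell_def arm_cell_def)

context valid_law
begin

lemma measurable_reassign_Y[measurable]: "reassign_Y y1 y0 \<in> measurable P triple_space"
proof -
  have "(\<lambda>\<omega>. (tX \<omega>, if tX \<omega> = 1 then y1 (tN \<omega>) else y0 (tN \<omega>), tN \<omega>))
      \<in> measurable P triple_space"
    by measurable
  then show ?thesis by (simp add: reassign_Y_def[abs_def])
qed

lemma measure_reassigned:
  "A \<in> sets triple_space \<Longrightarrow> measure (distr P triple_space (reassign_Y y1 y0)) A
     = measure P (reassign_Y y1 y0 -` A)"
  by (simp add: measure_distr)

lemma set_integral_reassigned:
  fixes f :: "_ \<Rightarrow> real"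
  assumes [measurable]: "A \<in> sets triple_space" "f \<in> borel_measurable triple_space"
  shows "(LINT \<omega>:A|distr P triple_space (reassign_Y y1 y0). f \<omega>)
    = (LINT \<omega>:reassign_Y y1 y0 -` A|P. f (reassign_Y y1 y0 \<omega>))"
  unfolding set_lebesgue_integral_def by (simp add: integral_distr indicator_vimage[symmetric])

lemma arm_prob_reassigned:
  "arm_prob (distr P triple_space (reassign_Y y1 y0)) x n = arm_prob P x n"
  by (simp add: arm_prob_def measure_reassigned)

lemma pN_reassigned: "pN (distr P triple_space (reassign_Y y1 y0)) n = pN P n"
  by (simp add: pN_eq_measure_cell measure_reassigned)

lemma XN_reassigned: "XN (distr P triple_space (reassign_Y y1 y0)) n = XN P n"
  by (simp add: XN_eq_cond_ev_cell cond_ev_def measure_reassigned set_integral_reassigned)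

lemma arm_Y_reassigned:
  "arm_Y (distr P triple_space (reassign_Y y1 y0)) x n
    = arm_prob P x n * (if x = 1 then y1 n else y0 n)"
proof -
  have "arm_Y (distr P triple_space (reassign_Y y1 y0)) x n
      = (LINT \<omega>:arm_cell x n|P. tY (reassign_Y y1 y0 \<omega>))"
    by (simp add: arm_Y_def set_integral_reassigned)
  also have "\<dots> = (LINT \<omega>:arm_cell x n|P. if x = 1 then y1 n else y0 n)"
    by (rule set_lebesgue_integral_cong[OF sets_cells_P(2)]) (auto simp: arm_cell_def)
  finally show ?thesis by (simp add: set_integral_const emeasure_eq_measure arm_prob_def)
qed

lemma integrable_tY_reassigned: "integrable (distr P triple_space (reassign_Y y1 y0)) tY"
proof -
  define B where "B = (\<Sum>n\<in>UNIV. \<bar>y1 n\<bar> + \<bar>y0 n\<bar>)"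
  have sum_bound: "\<bar>y1 m\<bar> + \<bar>y0 m\<bar> \<le> B" for m
    unfolding B_def by (rule member_le_sum) simp_all
  have bound: "\<bar>y1 m\<bar> \<le> B" "\<bar>y0 m\<bar> \<le> B" for m
    using sum_bound[of m] abs_ge_zero[of "y1 m"] abs_ge_zero[of "y0 m"] by linarith+
  have "integrable P (\<lambda>\<omega>. if tX \<omega> = 1 then y1 (tN \<omega>) else y0 (tN \<omega>))"
    by (intro integrable_const_bound[where B = B]) (simp_all add: bound)
  then show ?thesis by (simp add: integrable_distr_eq)
qed

lemma valid_reassigned:
  assumes "\<And>n. 0 < arm_prob P 1 n \<Longrightarrow> y1 n \<in> {lo..hi}"
    and "\<And>n. 0 < arm_prob P 0 n \<Longrightarrow> y0 n \<in> {lo..hi}"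
  shows "valid_triple (distr P triple_space (reassign_Y y1 y0)) lo hi"
  unfolding valid_triple_def
proof (intro conjI ballI allI impI)
  let ?Q = "distr P triple_space (reassign_Y y1 y0)"
  show "prob_space ?Q" by (rule prob_space_distr) measurable
  show "sets ?Q = sets triple_space" by simp
  show "AE \<omega> in ?Q. tX \<omega> \<in> {0, 1}"
  proof (subst AE_distr_iff[OF measurable_reassign_Y])
    have arms: "{\<omega> \<in> space triple_space. tX \<omega> \<in> {0, 1}} = {\<omega>. tX \<omega> = 0} \<union> {\<omega>. tX \<omega> = 1}"
      by auto
    show "{\<omega> \<in> space triple_space. tX \<omega> \<in> {0, 1}} \<in> sets triple_space"
      unfolding arms by (intro sets.Un sets_tX_eq)
  qed (use AE_tX_01 in simp)
  show "integrable ?Q tY" by (rule integrable_tY_reassigned)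
  fix x :: real and n
  assume x: "x \<in> {0, 1}" and "0 < measure ?Q {\<omega>. tX \<omega> = x \<and> tN \<omega> = n}"
  then have pos: "0 < arm_prob P x n"
    using arm_prob_reassigned[where x = x and n = n] by (simp add: arm_prob_def arm_cell_def)
  then have "cond_ev ?Q tY (arm_cell x n) = (if x = 1 then y1 n else y0 n)"
    using arm_Y_reassigned[where x = x and n = n] arm_prob_reassigned[where x = x and n = n]
    by (simp add: cond_ev_def arm_Y_def arm_prob_def)
  then show "cond_ev ?Q tY {\<omega>. tX \<omega> = x \<and> tN \<omega> = n} \<in> {lo..hi}"
    using x pos assms by (auto simp: arm_cell_def)
qed

lemma same_obs_reassigned:
  assumes "valid_triple (distr P triple_space (reassign_Y y1 y0)) lo hi"
    and "\<And>n. arm_prob P 1 n * y1 n + arm_prob P 0 n * y0 n = pN P n * YN P n"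
  shows "same_obs P (distr P triple_space (reassign_Y y1 y0))"
proof -
  let ?Q = "distr P triple_space (reassign_Y y1 y0)"
  interpret Q: valid_law ?Q lo hi by (rule valid_law.intro) (fact assms(1))
  have "YN ?Q n = YN P n" for n
  proof (cases "pN P n = 0")
    case True
    then show ?thesis by (simp add: YN_eq_zero_if_pN_eq_zero pN_reassigned)
  next
    case False
    have "pN P n * YN ?Q n = pN P n * YN P n"
      using Q.pN_mult_YN[of n] assms(2)[of n] by (simp add: pN_reassigned arm_Y_reassigned mult.commute)
    then show ?thesis using False by simp
  qed
  then show ?thesis by (simp add: same_obs_def pN_reassigned XN_reassigned)
qed

lemma moments_eq_if_same_obs:
  assumes "valid_triple Q lo' hi'" "same_obs P Q"
  shows "(\<integral>\<omega>. tX \<omega> \<partial>Q) = expectation tX" "(\<integral>\<omega>. tY \<omega> \<partial>Q) = expectation tY"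
    "var_X Q = var_X P"
proof -
  interpret Q: valid_law Q lo' hi' by (rule valid_law.intro) (fact assms(1))
  have "pN Q = pN P" "XN Q = XN P" "YN Q = YN P"
    using assms(2) by (auto simp: same_obs_def fun_eq_iff)
  then show "(\<integral>\<omega>. tX \<omega> \<partial>Q) = expectation tX" "(\<integral>\<omega>. tY \<omega> \<partial>Q) = expectation tY"
    "var_X Q = var_X P"
    by (simp_all add: Q.expectation_tX Q.expectation_tY expectation_tX expectation_tY
        Q.var_X_eq var_X_eq)
qed

lemma arm_means_realising:
  assumes "lo \<le> hi"
    and "\<And>n. 0 < pN P n \<Longrightarrow>
      c n \<in> {mob_lower lo hi (XN P n) (YN P n)..mob_upper lo hi (XN P n) (YN P n)}"
  obtains y1 y0 where
    "\<And>n. 0 < arm_prob P 1 n \<Longrightarrow> y1 n \<in> {lo..hi}" "\<And>n. 0 < arm_prob P 0 n \<Longrightarrow> y0 n \<in> {lo..hi}"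
    "\<And>n. arm_prob P 1 n * y1 n = pN P n * c n"
    "\<And>n. arm_prob P 0 n * y0 n = pN P n * (YN P n - c n)"
proof -
  have "\<exists>v1 v0. 0 < pN P n \<longrightarrow> XN P n * v1 = c n \<and> (1 - XN P n) * v0 = YN P n - c n
      \<and> v1 \<in> {lo..hi} \<and> v0 \<in> {lo..hi}" for n
  proof (cases "0 < pN P n")
    case True
    then have "mob_lower lo hi (XN P n) (YN P n) \<le> c n" "c n \<le> mob_upper lo hi (XN P n) (YN P n)"
      using assms(2) by simp_all
    then obtain v1 v0 where "XN P n * v1 = c n" "(1 - XN P n) * v0 = YN P n - c n"
        "v1 \<in> {lo..hi}" "v0 \<in> {lo..hi}"
      by (rule split_mean_between_arms[OF assms(1)])
    then show ?thesis by blast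
  qed simp
  then obtain y1 y0 where y: "\<And>n. 0 < pN P n \<Longrightarrow> XN P n * y1 n = c n \<and>
      (1 - XN P n) * y0 n = YN P n - c n \<and> y1 n \<in> {lo..hi} \<and> y0 n \<in> {lo..hi}"
    by metis
  have arm_probs: "arm_prob P 1 n = pN P n * XN P n" "arm_prob P 0 n = pN P n * (1 - XN P n)" for n
    using pN_mult_XN[of n] pN_eq_arm_prob_sum[of n] by (simp_all add: algebra_simps)
  show ?thesis
  proof
    show "y1 n \<in> {lo..hi}" if "0 < arm_prob P 1 n" for n
      using y[OF less_le_trans[OF that arm_prob_le_pN(1)]] by simp
    show "y0 n \<in> {lo..hi}" if "0 < arm_prob P 0 n" for n
      using y[OF less_le_trans[OF that arm_prob_le_pN(2)]] by simp
    have "pN P n = 0 \<or> 0 < pN P n" for n by (simp add: pN_def order_less_le)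
    then show "arm_prob P 1 n * y1 n = pN P n * c n"
      "arm_prob P 0 n * y0 n = pN P n * (YN P n - c n)" for n
      using y[of n] by (auto simp: arm_probs mult.assoc)
  qed
qed

lemma mob_bounds_attained:
  assumes "lo \<le> hi" "0 < expectation tX" "expectation tX < 1"
    and "d \<in> {D_MOB_minus P lo hi..D_MOB_plus P lo hi}"
  shows "\<exists>Q. valid_triple Q lo hi \<and> same_obs P Q \<and> Dpar Q = d"
proof -
  define L where "L n = mob_lower lo hi (XN P n) (YN P n)" for n
  define U where "U n = mob_upper lo hi (XN P n) (YN P n)" for n
  define T where "T = d * var_X P + expectation tX * expectation tY"
  have var_pos: "0 < var_X P" using assms(2,3) by (simp add: var_X_eq)
  then have "(\<Sum>n\<in>UNIV. pN P n * L n) \<le> T" "T \<le> (\<Sum>n\<in>UNIV. pN P n * U n)"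
    using assms(4) by (simp_all add: D_MOB_minus_eq D_MOB_plus_eq L_def U_def T_def
        pos_divide_le_eq pos_le_divide_eq)
  then obtain c where c: "\<And>n. L n \<le> U n \<Longrightarrow> c n \<in> {L n..U n}" "(\<Sum>n\<in>UNIV. pN P n * c n) = T"
    by (rule weighted_sum_interpolation) blast
  obtain y1 y0 where y:
    "\<And>n. 0 < arm_prob P 1 n \<Longrightarrow> y1 n \<in> {lo..hi}" "\<And>n. 0 < arm_prob P 0 n \<Longrightarrow> y0 n \<in> {lo..hi}"
    "\<And>n. arm_prob P 1 n * y1 n = pN P n * c n"
    "\<And>n. arm_prob P 0 n * y0 n = pN P n * (YN P n - c n)"
    using arm_means_realising[OF assms(1)] c(1) mob_lower_le_upper unfolding L_def U_def by blast
  let ?Q = "distr P triple_space (reassign_Y y1 y0)"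
  have valid_Q: "valid_triple ?Q lo hi" using y(1,2) by (rule valid_reassigned)
  have same_Q: "same_obs P ?Q"
    by (rule same_obs_reassigned[OF valid_Q]) (simp add: y(3,4) right_diff_distrib)
  interpret Q: valid_law ?Q lo hi by (rule valid_law.intro) (fact valid_Q)
  have "Dpar ?Q = ((\<Sum>n\<in>UNIV. pN P n * c n) - expectation tX * expectation tY) / var_X P"
    using Q.Dpar_eq_cov assms(2,3) moments_eq_if_same_obs[OF valid_Q same_Q]
    by (simp add: arm_Y_reassigned y(3))
  then have "Dpar ?Q = d" using var_pos by (simp add: c(2) T_def)
  then show ?thesis using valid_Q same_Q by blast
qed

end

theorem proposition3:
  fixes P :: "(real \<times> real \<times> 'n::finite) measure" and lo hi :: real
  assumes "lo \<le> hi"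
    and "valid_triple P lo hi"
    and "\<exists>n. pN P n > 0 \<and> XN P n \<in> {0<..<1}"
  shows "Dpar P \<in> {D_MOB_minus P lo hi .. D_MOB_plus P lo hi}
    \<and> (\<forall>d \<in> {D_MOB_minus P lo hi .. D_MOB_plus P lo hi}.
          \<exists>Q :: (real \<times> real \<times> 'n) measure.
             valid_triple Q lo hi \<and> same_obs P Q \<and> Dpar Q = d)"
proof -
  interpret valid_law P lo hi by (rule valid_law.intro) (fact assms(2))
  obtain n where "0 < pN P n" "XN P n \<in> {0<..<1}" using assms(3) by blast
  then have "0 < expectation tX" "expectation tX < 1"
    by (rule expectation_tX_strictly_between)+
  then show ?thesis
    using Dpar_within_mob_bounds mob_bounds_attained[OF assms(1)] by blast
qed

end
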